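(* Consider the four-dimensional pp-wave spacetime with coordinates $(u,v,x,y)$ and metric $ds^2=H(u,x,y)\,du^2+2\,du\,dv+dx^2+dy^2$, where $H$ is an arbitrary smooth function of $u,x,y$. Then: (i) the 1-form $u\,du$ (dual to $u\,\partial_v$) is a closed affine vector field, i.e. a closed rank-1 antisymmetric affine tensor field; (ii) $du\wedge dx$ and $du\wedge dy$ are Killing–Yano tensors; (iii) $u\,du\wedge dx$ and $u\,du\wedge dy$ are proper rank-2 antisymmetric affine tensor fields; (iv) $u\,du\wedge dx\wedge dy$ is a rank-3 antisymmetric affine tensor field.
   Context: $\nabla$ is the Levi-Civita connection; symmetrization $(\cdots)$ over $k$ indices has weight $1/k!$. A rank-$p$ antisymmetric affine tensor field is a $p$-form $f$ with $\nabla_\mu\nabla_{(\nu}f_{\rho_1)\rho_2\cdots\rho_p}=0$; it is closed if $df=0$, Killing–Yano if $\nabla_{(\mu}f_{\nu_1)\nu_2\cdots\nu_p}=0$, and proper if $\nabla_{(\mu}f_{\nu_1)\nu_2\cdots\nu_p}\neq0$. For $p=1$ such a field is (the dual of) an affine vector field. *)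

theory Defs
  imports "HOL-Analysis.Analysis"
begin

text \<open>Coordinates on R^4 are indexed by the numeral type 4:
  index 0 = u, 1 = v, 2 = x, 3 = y. A covariant tensor field of rank k is
  represented by its coordinate components: a function of the point and of
  a list of k indices.\<close>

type_synonym pt = "real^4"
type_synonym tfield = "pt \<Rightarrow> 4 list \<Rightarrow> real"

definition pd :: "4 \<Rightarrow> (pt \<Rightarrow> real) \<Rightarrow> pt \<Rightarrow> real" where
  "pd i F p = deriv (\<lambda>t. F (p + t *\<^sub>R axis i 1)) 0"

definition smooth4 :: "(pt \<Rightarrow> real) \<Rightarrow> bool" where
  "smooth4 F \<longleftrightarrow> (\<forall>is p. (foldr pd is F) differentiable (at p))"

text \<open>Christoffel symbols of the Levi-Civita connection of the metric g:
  christoffel g p k i j = Gamma^k_{ij}(p).\<close>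
definition christoffel :: "(pt \<Rightarrow> real^4^4) \<Rightarrow> pt \<Rightarrow> 4 \<Rightarrow> 4 \<Rightarrow> 4 \<Rightarrow> real" where
  "christoffel g p k i j =
     (\<Sum>l\<in>UNIV. (matrix_inv (g p)) $ k $ l *
        (pd i (\<lambda>q. g q $ l $ j) p + pd j (\<lambda>q. g q $ l $ i) p - pd l (\<lambda>q. g q $ i $ j) p)) / 2"

text \<open>Levi-Civita covariant derivative of a covariant tensor; the new index comes first:
  (nabla T)_{mu nu_1 ... nu_k}.\<close>
definition cov :: "(pt \<Rightarrow> real^4^4) \<Rightarrow> tfield \<Rightarrow> tfield" where
  "cov g T p idx = (case idx of [] \<Rightarrow> 0
     | \<mu> # \<nu>s \<Rightarrow> pd \<mu> (\<lambda>q. T q \<nu>s) p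
          - (\<Sum>a<length \<nu>s. \<Sum>l\<in>UNIV. christoffel g p l \<mu> (\<nu>s ! a) * T p (\<nu>s[a := l])))"

definition sym2 :: "tfield \<Rightarrow> tfield" where
  "sym2 T p idx = (case idx of a # b # rest \<Rightarrow> (T p (a # b # rest) + T p (b # a # rest)) / 2 | _ \<Rightarrow> 0)"

definition is_form :: "nat \<Rightarrow> tfield \<Rightarrow> bool" where
  "is_form k T \<longleftrightarrow> (\<forall>idx. length idx = k \<longrightarrow> smooth4 (\<lambda>p. T p idx)) \<and>
     (\<forall>p idx i. length idx = k \<and> Suc i < k \<longrightarrow>
        T p (idx[i := idx ! Suc i, Suc i := idx ! i]) = - T p idx)"

definition ext_d :: "tfield \<Rightarrow> tfield" where
  "ext_d T p idx = (\<Sum>a<length idx. (-1) ^ a * pd (idx ! a) (\<lambda>q. T q (take a idx @ drop (Suc a) idx)) p)"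

definition closed_form :: "nat \<Rightarrow> tfield \<Rightarrow> bool" where
  "closed_form k T \<longleftrightarrow> (\<forall>p idx. length idx = Suc k \<longrightarrow> ext_d T p idx = 0)"

definition affine_tensor :: "(pt \<Rightarrow> real^4^4) \<Rightarrow> nat \<Rightarrow> tfield \<Rightarrow> bool" where
  "affine_tensor g k T \<longleftrightarrow> is_form k T \<and>
     (\<forall>p idx. length idx = k + 2 \<longrightarrow> cov g (sym2 (cov g T)) p idx = 0)"

definition killing_yano :: "(pt \<Rightarrow> real^4^4) \<Rightarrow> nat \<Rightarrow> tfield \<Rightarrow> bool" where
  "killing_yano g k T \<longleftrightarrow> is_form k T \<and>
     (\<forall>p idx. length idx = k + 1 \<longrightarrow> sym2 (cov g T) p idx = 0)"

definition proper_affine :: "(pt \<Rightarrow> real^4^4) \<Rightarrow> nat \<Rightarrow> tfield \<Rightarrow> bool" where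
  "proper_affine g k T \<longleftrightarrow> affine_tensor g k T \<and>
     (\<exists>p idx. length idx = k + 1 \<and> sym2 (cov g T) p idx \<noteq> 0)"

text \<open>Components of dx^{c_1} wedge ... wedge dx^{c_k} (determinant convention).\<close>
definition cwedge :: "4 list \<Rightarrow> 4 list \<Rightarrow> real" where
  "cwedge cs idx = (if length idx = length cs then
     (\<Sum>\<sigma> | \<sigma> permutes {..<length cs}. of_int (sign \<sigma>) *
        (\<Prod>r<length cs. if idx ! r = cs ! (\<sigma> r) then 1 else 0)) else 0)"

definition pp_metric :: "(real \<Rightarrow> real \<Rightarrow> real \<Rightarrow> real) \<Rightarrow> pt \<Rightarrow> real^4^4" where
  "pp_metric H p = (\<chi> i j. if i = 0 \<and> j = 0 then H (p $ 0) (p $ 2) (p $ 3)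
     else if (i = 0 \<and> j = 1) \<or> (i = 1 \<and> j = 0) then 1
     else if i = j \<and> (i = 2 \<or> i = 3) then 1 else 0)"

end

theory Submission
  imports Defs
begin

text \<open>The only nonzero Christoffel symbols of the pp-wave are \<open>\<Gamma>\<^sup>v\<^sub>i\<^sub>j\<close> and
  \<open>\<Gamma>\<^sup>x\<^sub>u\<^sub>u\<close>, \<open>\<Gamma>\<^sup>y\<^sub>u\<^sub>u\<close>. The first ones do not see forms without a dv
  component, and the last two cancel on forms of the shape du \<and> \<dots>, so du, du \<and> dx, du \<and> dy
  and du \<and> dx \<and> dy are parallel; in particular du \<and> dx and du \<and> dy are Killing-Yano.
  For a parallel form W one has \<open>\<nabla>(u W) = du \<otimes> W\<close>, and by the Leibniz rule the
  symmetrisation of \<open>du \<otimes> W\<close> is again parallel, so u W is an affine tensor field; it is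
  proper because this symmetrisation does not vanish.\<close>

lemma UNIV_4_from_0: "(UNIV :: 4 set) = {0, 1, 2, 3}"
proof -
  have "(4::4) = 0" by simp
  then show ?thesis using UNIV_4 by auto
qed

lemma sum_UNIV_4_from_0: "sum f (UNIV :: 4 set) = f 0 + f 1 + f 2 + f 3"
  unfolding UNIV_4_from_0 by (simp add: ac_simps)

lemma forall_4_from_0: "(\<forall>i::4. P i) \<longleftrightarrow> P 0 \<and> P 1 \<and> P 2 \<and> P 3"
proof -
  have "(\<forall>i::4. P i) \<longleftrightarrow> (\<forall>i\<in>UNIV. P i)" by blast
  then show ?thesis
    unfolding UNIV_4_from_0 by simp
qed

lemma exhaust_4_from_0:
  fixes i :: 4
  obtains "i = 0" | "i = 1" | "i = 2" | "i = 3"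
  using UNIV_4_from_0 by auto

lemma pd_const: "pd i (\<lambda>q. c) p = 0"
  unfolding pd_def by simp

lemma pd_coordinate_times: "pd i (\<lambda>q. q $ j * c) p = (if i = j then c else 0)"
proof -
  have "((\<lambda>t. (p + t *\<^sub>R axis i 1) $ j * c) has_real_derivative (if i = j then c else 0)) (at 0)"
    unfolding axis_def by (auto intro!: derivative_eq_intros)
  then show ?thesis
    unfolding pd_def by (rule DERIV_imp_deriv)
qed

lemma foldr_pd_const: "foldr pd is (\<lambda>p. c) = (\<lambda>p. if is = [] then c else 0)"
  by (induction "is") (simp_all add: pd_const)

lemma foldr_pd_coordinate_times:
  "is \<noteq> [] \<Longrightarrow> \<exists>k. foldr pd is (\<lambda>q. q $ j * c) = (\<lambda>q. k)"
proof (induction "is")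
  case (Cons i js)
  show ?case
  proof (cases "js = []")
    case True
    then show ?thesis by (auto simp: pd_coordinate_times)
  next
    case False
    with Cons obtain k where "foldr pd js (\<lambda>q. q $ j * c) = (\<lambda>q. k)" by blast
    then show ?thesis by (auto simp: pd_const)
  qed
qed simp

lemma smooth4_const: "smooth4 (\<lambda>p. c)"
  unfolding smooth4_def foldr_pd_const by auto

lemma smooth4_coordinate_times: "smooth4 (\<lambda>q. q $ j * c)"
  unfolding smooth4_def
proof (intro allI)
  fix "is" p
  show "foldr pd is (\<lambda>q. q $ j * c) differentiable at p"
  proof (cases "is = []")
    case True
    have "bounded_linear (\<lambda>q::pt. q $ j * c)"
      by (rule bounded_linear_compose[OF bounded_linear_mult_left bounded_linear_vec_nth])
    then have "(\<lambda>q::pt. q $ j * c) differentiable at p"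
      by (rule bounded_linear_imp_differentiable)
    then show ?thesis
      using True by simp
  next
    case False
    then obtain k where "foldr pd is (\<lambda>q. q $ j * c) = (\<lambda>q. k)"
      using foldr_pd_coordinate_times by blast
    then show ?thesis by simp
  qed
qed

lemma cwedge_swap_adjacent:
  assumes "length idx = length cs" "Suc i < length cs"
  shows "cwedge cs (idx[i := idx ! Suc i, Suc i := idx ! i]) = - cwedge cs idx"
proof -
  let ?n = "length cs" and ?\<tau> = "Transposition.transpose i (Suc i)"
  let ?P = "\<lambda>\<rho>. \<Prod>r<?n. if idx ! r = cs ! \<rho> r then 1 else 0 :: real"
  have \<tau>: "?\<tau> permutes {..<?n}"
    using assms(2) by (intro permutes_swap_id) auto
  have swapped: "idx[i := idx ! Suc i, Suc i := idx ! i] ! r = idx ! ?\<tau> r" if "r < ?n" for r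
    using that assms by (auto simp: nth_list_update transpose_def)
  have P_swap: "(\<Prod>r<?n. if idx[i := idx ! Suc i, Suc i := idx ! i] ! r = cs ! \<sigma> r then 1 else 0)
      = ?P (\<sigma> \<circ> ?\<tau>)" for \<sigma>
  proof -
    have "(\<Prod>r<?n. if idx[i := idx ! Suc i, Suc i := idx ! i] ! r = cs ! \<sigma> r then 1 else 0)
        = (\<Prod>r<?n. (\<lambda>s. if idx ! s = cs ! (\<sigma> \<circ> ?\<tau>) s then 1 else 0 :: real) (?\<tau> r))"
      by (intro prod.cong) (simp_all add: swapped)
    also have "\<dots> = ?P (\<sigma> \<circ> ?\<tau>)"
      by (rule prod.reindex_bij_betw[OF permutes_imp_bij[OF \<tau>]])
    finally show ?thesis .
  qed
  have sign_swap: "of_int (sign \<sigma>) = - (of_int (sign (\<sigma> \<circ> ?\<tau>)) :: real)"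
    if "\<sigma> permutes {..<?n}" for \<sigma>
  proof -
    have "permutation \<sigma>" "permutation ?\<tau>"
      using that \<tau> by (auto simp: permutation_permutes)
    then show ?thesis
      by (simp add: sign_compose sign_swap_id)
  qed
  have "cwedge cs (idx[i := idx ! Suc i, Suc i := idx ! i])
      = (\<Sum>\<sigma> | \<sigma> permutes {..<?n}. - (of_int (sign (\<sigma> \<circ> ?\<tau>)) * ?P (\<sigma> \<circ> ?\<tau>)))"
    using assms(1) unfolding cwedge_def by (auto intro!: sum.cong simp: P_swap sign_swap)
  also have "\<dots> = - (\<Sum>\<sigma> | \<sigma> permutes {..<?n}. of_int (sign (\<sigma> \<circ> ?\<tau>)) * ?P (\<sigma> \<circ> ?\<tau>))"
    by (simp only: sum_negf)
  also have "\<dots> = - (\<Sum>\<sigma> | \<sigma> permutes {..<?n}. of_int (sign \<sigma>) * ?P \<sigma>)"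
    using sum_permutations_compose_right[OF \<tau>, of "\<lambda>\<sigma>. of_int (sign \<sigma>) * ?P \<sigma>"] by simp
  also have "\<dots> = - cwedge cs idx"
    using assms(1) by (simp add: cwedge_def)
  finally show ?thesis .
qed

lemma cwedge_eq_0_if_index_not_in:
  assumes "x \<in> set idx" "x \<notin> set cs"
  shows "cwedge cs idx = 0"
proof -
  obtain r where r: "r < length idx" "idx ! r = x"
    using assms(1) by (auto simp: in_set_conv_nth)
  have "(\<Prod>r<length cs. if idx ! r = cs ! \<sigma> r then 1 else 0) = (0 :: real)"
    if "\<sigma> permutes {..<length cs}" "length idx = length cs" for \<sigma>
  proof -
    have "\<sigma> r < length cs"
      using permutes_in_image[OF that(1)] r(1) that(2) by auto
    then have "idx ! r \<noteq> cs ! \<sigma> r"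
      using r(2) assms(2) nth_mem by metis
    then show ?thesis
      using r(1) that(2) by (intro prod_zero) auto
  qed
  then show ?thesis
    unfolding cwedge_def by (simp add: sum.neutral)
qed

lemma cwedge_singleton: "cwedge [a] [i] = of_bool (i = a)"
proof -
  have "{..<Suc 0} = {0::nat}" by auto
  then show ?thesis
    unfolding cwedge_def by (simp add: permutes_sing sign_id)
qed

lemma cwedge_two: "cwedge [a, b] [i, j] = of_bool (i = a \<and> j = b) - of_bool (i = b \<and> j = a)"
proof -
  have e: "{..<length [a, b]} = insert (0::nat) {1}" by auto
  have f: "finite {1::nat}" "0 \<notin> {1::nat}" by auto
  show ?thesis
    unfolding cwedge_def
    apply (simp only: e if_True)
    unfolding sum_over_permutations_insert[OF f] permutes_sing
    by (simp add: sign_swap_id sign_id lessThan_Suc)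
qed

lemma cwedge_three: "cwedge [a, b, c] [i, j, k] =
    of_bool (i = a \<and> j = b \<and> k = c) + of_bool (i = b \<and> j = c \<and> k = a)
  + of_bool (i = c \<and> j = a \<and> k = b) - of_bool (i = a \<and> j = c \<and> k = b)
  - of_bool (i = b \<and> j = a \<and> k = c) - of_bool (i = c \<and> j = b \<and> k = a)"
proof -
  have e: "{..<length [a, b, c]} = insert (0::nat) (insert 1 {2})" by auto
  have f: "finite (insert 1 {2::nat})" "0 \<notin> insert 1 {2::nat}" by auto
  have f2: "finite {2::nat}" "1 \<notin> {2::nat}" by auto
  show ?thesis
    unfolding cwedge_def
    apply (simp only: e if_True)
    unfolding sum_over_permutations_insert[OF f] sum_over_permutations_insert[OF f2] permutes_sing
    by (simp add: sign_swap_id permutation_swap_id sign_compose sign_id lessThan_Suc numeral_eq_Suc)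
qed

definition christoffel_sum :: "(pt \<Rightarrow> real^4^4) \<Rightarrow> pt \<Rightarrow> 4 \<Rightarrow> (4 list \<Rightarrow> real) \<Rightarrow> 4 list \<Rightarrow> real" where
  "christoffel_sum g p \<mu> W \<nu>s =
     (\<Sum>a<length \<nu>s. \<Sum>l\<in>UNIV. christoffel g p l \<mu> (\<nu>s ! a) * W (\<nu>s[a := l]))"

lemma cov_Cons: "cov g T p (\<mu> # \<nu>s) = pd \<mu> (\<lambda>q. T q \<nu>s) p - christoffel_sum g p \<mu> (T p) \<nu>s"
  unfolding cov_def christoffel_sum_def by simp

lemma christoffel_sum_Nil: "christoffel_sum g p \<mu> W [] = 0"
  unfolding christoffel_sum_def by simp

lemma christoffel_sum_Cons:
  "christoffel_sum g p \<mu> W (\<nu> # \<nu>s) =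
     (\<Sum>l\<in>UNIV. christoffel g p l \<mu> \<nu> * W (l # \<nu>s)) + christoffel_sum g p \<mu> (\<lambda>\<rho>s. W (\<nu> # \<rho>s)) \<nu>s"
  unfolding christoffel_sum_def length_Cons sum.lessThan_Suc_shift by simp

lemma christoffel_sum_linear:
  "christoffel_sum g p \<mu> (\<lambda>\<rho>s. a * V \<rho>s + b * W \<rho>s) \<nu>s =
     a * christoffel_sum g p \<mu> V \<nu>s + b * christoffel_sum g p \<mu> W \<nu>s"
  unfolding christoffel_sum_def
  by (simp add: algebra_simps sum.distrib sum_distrib_left)

definition parallel :: "(pt \<Rightarrow> real^4^4) \<Rightarrow> (4 list \<Rightarrow> real) \<Rightarrow> bool" where
  "parallel g W \<longleftrightarrow> (\<forall>p idx. cov g (\<lambda>_. W) p idx = 0)"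

lemma parallel_iff_christoffel_sum:
  "parallel g W \<longleftrightarrow> (\<forall>p \<mu> \<nu>s. christoffel_sum g p \<mu> W \<nu>s = 0)"
proof -
  have Cons: "cov g (\<lambda>_. W) p (\<mu> # \<nu>s) = - christoffel_sum g p \<mu> W \<nu>s" for p \<mu> \<nu>s
    by (simp add: cov_Cons pd_const)
  have Nil: "cov g (\<lambda>_. W) p [] = 0" for p
    by (simp add: cov_def)
  show ?thesis
    unfolding parallel_def
  proof (intro iffI allI)
    fix p \<mu> \<nu>s
    assume "\<forall>p idx. cov g (\<lambda>_. W) p idx = 0"
    then show "christoffel_sum g p \<mu> W \<nu>s = 0"
      using Cons[of p \<mu> \<nu>s] by simp
  next
    fix p idx
    assume "\<forall>p \<mu> \<nu>s. christoffel_sum g p \<mu> W \<nu>s = 0"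
    then show "cov g (\<lambda>_. W) p idx = 0"
      by (cases idx) (simp_all add: Cons Nil)
  qed
qed

definition du_tensor :: "(4 list \<Rightarrow> real) \<Rightarrow> 4 list \<Rightarrow> real" where
  "du_tensor W idx = (case idx of [] \<Rightarrow> 0 | \<mu> # \<nu>s \<Rightarrow> of_bool (\<mu> = 0) * W \<nu>s)"

definition du_sym_tensor :: "(4 list \<Rightarrow> real) \<Rightarrow> 4 list \<Rightarrow> real" where
  "du_sym_tensor W idx = (case idx of
     a # b # rest \<Rightarrow> (of_bool (a = 0) * W (b # rest) + of_bool (b = 0) * W (a # rest)) / 2
   | _ \<Rightarrow> 0)"

lemma sym2_du_tensor: "sym2 (\<lambda>_. du_tensor W) = (\<lambda>_. du_sym_tensor W)"
  unfolding sym2_def du_tensor_def du_sym_tensor_def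
  by (auto simp: fun_eq_iff split: list.split)

lemma cov_coordinate_u_times:
  "cov g (\<lambda>p idx. p $ 0 * W idx) p (\<mu> # \<nu>s) = of_bool (\<mu> = 0) * W \<nu>s + p $ 0 * cov g (\<lambda>_. W) p (\<mu> # \<nu>s)"
proof -
  have "christoffel_sum g p \<mu> (\<lambda>idx. p $ 0 * W idx) \<nu>s = p $ 0 * christoffel_sum g p \<mu> W \<nu>s"
    using christoffel_sum_linear[where b = 0] by simp
  moreover have "pd \<mu> (\<lambda>q. q $ 0 * W \<nu>s) p = of_bool (\<mu> = 0) * W \<nu>s"
    by (simp add: pd_coordinate_times)
  ultimately show ?thesis
    by (simp add: cov_Cons pd_const algebra_simps)
qed

lemma cov_coordinate_u_times_parallel:
  assumes "parallel g W"
  shows "cov g (\<lambda>p idx. p $ 0 * W idx) = (\<lambda>_. du_tensor W)"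
proof (intro ext)
  fix p idx
  show "cov g (\<lambda>p idx. p $ 0 * W idx) p idx = du_tensor W idx"
  proof (cases idx)
    case (Cons \<mu> \<nu>s)
    have "cov g (\<lambda>_. W) p (\<mu> # \<nu>s) = 0"
      using assms unfolding parallel_def by blast
    then show ?thesis
      by (simp add: Cons cov_coordinate_u_times du_tensor_def)
  qed (simp add: cov_def du_tensor_def)
qed

lemma du_sym_tensor_swap: "du_sym_tensor W (a # b # rest) = du_sym_tensor W (b # a # rest)"
  by (simp add: du_sym_tensor_def)

lemma christoffel_contract_du_sym_tensor:
  assumes du_parallel: "\<And>i j. christoffel g p 0 i j = 0"
  shows "(\<Sum>l\<in>UNIV. christoffel g p l \<mu> \<nu> * du_sym_tensor W (l # y # rest))
    = of_bool (y = 0) * (\<Sum>l\<in>UNIV. christoffel g p l \<mu> \<nu> * W (l # rest)) / 2"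
proof -
  have du: "(\<Sum>l\<in>UNIV. christoffel g p l \<mu> \<nu> * (of_bool (l = 0) * c)) = 0" for c
  proof -
    have "(\<Sum>l\<in>UNIV. christoffel g p l \<mu> \<nu> * (of_bool (l = 0) * c))
        = (\<Sum>l\<in>UNIV. if l = 0 then christoffel g p l \<mu> \<nu> * c else 0)"
      by (intro sum.cong) auto
    then show ?thesis
      by (simp add: du_parallel)
  qed
  have "(\<Sum>l\<in>UNIV. christoffel g p l \<mu> \<nu> * du_sym_tensor W (l # y # rest))
      = (\<Sum>l\<in>UNIV. (christoffel g p l \<mu> \<nu> * (of_bool (l = 0) * W (y # rest))
          + of_bool (y = 0) * (christoffel g p l \<mu> \<nu> * W (l # rest))) / 2)"
    by (intro sum.cong) (simp_all add: du_sym_tensor_def algebra_simps)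
  also have "\<dots> = (\<Sum>l\<in>UNIV. christoffel g p l \<mu> \<nu> * (of_bool (l = 0) * W (y # rest))) / 2
      + of_bool (y = 0) * (\<Sum>l\<in>UNIV. christoffel g p l \<mu> \<nu> * W (l # rest)) / 2"
    by (simp only: sum_divide_distrib[symmetric] sum.distrib sum_distrib_left add_divide_distrib)
  also have "\<dots> = of_bool (y = 0) * (\<Sum>l\<in>UNIV. christoffel g p l \<mu> \<nu> * W (l # rest)) / 2"
    by (simp only: du)
  finally show ?thesis .
qed

text \<open>The hypothesis on the Christoffel symbols says that du is parallel; this is the
  Leibniz rule for the symmetric product of du with W.\<close>
lemma christoffel_sum_du_sym_tensor:
  assumes du_parallel: "\<And>i j. christoffel g p 0 i j = 0"
  shows "christoffel_sum g p \<mu> (du_sym_tensor W) (x # y # rest)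
    = (of_bool (x = 0) * christoffel_sum g p \<mu> W (y # rest)
       + of_bool (y = 0) * christoffel_sum g p \<mu> W (x # rest)) / 2"
proof -
  let ?\<Gamma>W = "\<lambda>\<nu> \<rho>s. \<Sum>l\<in>UNIV. christoffel g p l \<mu> \<nu> * W (l # \<rho>s)"
  have "(\<lambda>\<rho>s. du_sym_tensor W (x # y # \<rho>s))
      = (\<lambda>\<rho>s. (of_bool (x = 0) / 2) * W (y # \<rho>s) + (of_bool (y = 0) / 2) * W (x # \<rho>s))"
    by (auto simp: du_sym_tensor_def fun_eq_iff)
  then have rest: "christoffel_sum g p \<mu> (\<lambda>\<rho>s. du_sym_tensor W (x # y # \<rho>s)) rest
      = of_bool (x = 0) / 2 * christoffel_sum g p \<mu> (\<lambda>\<rho>s. W (y # \<rho>s)) rest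
        + of_bool (y = 0) / 2 * christoffel_sum g p \<mu> (\<lambda>\<rho>s. W (x # \<rho>s)) rest"
    by (simp only: christoffel_sum_linear)
  have "christoffel_sum g p \<mu> (du_sym_tensor W) (x # y # rest)
      = (\<Sum>l\<in>UNIV. christoffel g p l \<mu> x * du_sym_tensor W (l # y # rest))
        + ((\<Sum>l\<in>UNIV. christoffel g p l \<mu> y * du_sym_tensor W (l # x # rest))
        + christoffel_sum g p \<mu> (\<lambda>\<rho>s. du_sym_tensor W (x # y # \<rho>s)) rest)"
    by (simp only: christoffel_sum_Cons du_sym_tensor_swap[of W x])
  also have "\<dots> = (of_bool (x = 0) * (?\<Gamma>W y rest + christoffel_sum g p \<mu> (\<lambda>\<rho>s. W (y # \<rho>s)) rest)
      + of_bool (y = 0) * (?\<Gamma>W x rest + christoffel_sum g p \<mu> (\<lambda>\<rho>s. W (x # \<rho>s)) rest)) / 2"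
    unfolding christoffel_contract_du_sym_tensor[OF du_parallel] rest by (simp add: field_simps)
  also have "\<dots> = (of_bool (x = 0) * christoffel_sum g p \<mu> W (y # rest)
      + of_bool (y = 0) * christoffel_sum g p \<mu> W (x # rest)) / 2"
    by (simp only: christoffel_sum_Cons)
  finally show ?thesis .
qed

lemma parallel_du_sym_tensor:
  assumes du_parallel: "\<And>p i j. christoffel g p 0 i j = 0"
    and "parallel g W"
  shows "parallel g (du_sym_tensor W)"
  unfolding parallel_iff_christoffel_sum
proof (intro allI)
  fix p \<mu> and \<nu>s :: "4 list"
  have W: "christoffel_sum g p \<mu> W \<rho>s = 0" for \<rho>s
    using assms(2) by (simp add: parallel_iff_christoffel_sum)
  consider "\<nu>s = []" | x where "\<nu>s = [x]" | x y rest where "\<nu>s = x # y # rest"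
    by (metis list.exhaust)
  then show "christoffel_sum g p \<mu> (du_sym_tensor W) \<nu>s = 0"
  proof cases
    case 1
    then show ?thesis by (simp add: christoffel_sum_Nil)
  next
    case 2
    then show ?thesis by (simp add: christoffel_sum_Cons christoffel_sum_Nil du_sym_tensor_def)
  next
    case 3
    then show ?thesis by (simp add: christoffel_sum_du_sym_tensor du_parallel W)
  qed
qed

lemma pd_H_v: "pd 1 (\<lambda>q. H (q $ 0) (q $ 2) (q $ 3)) p = 0"
proof -
  have "(\<lambda>t. H ((p + t *\<^sub>R axis 1 1) $ 0) ((p + t *\<^sub>R axis 1 1) $ 2) ((p + t *\<^sub>R axis 1 1) $ 3))
      = (\<lambda>t. H (p $ 0) (p $ 2) (p $ 3))"
    by (simp add: axis_def)
  then show ?thesis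
    unfolding pd_def by simp
qed

lemma pd_pp_metric:
  "pd i (\<lambda>q. pp_metric H q $ l $ j) p =
     (if l = 0 \<and> j = 0 then pd i (\<lambda>q. H (q $ 0) (q $ 2) (q $ 3)) p else 0)"
proof (cases "l = 0 \<and> j = 0")
  case False
  then have "(\<lambda>q. pp_metric H q $ l $ j) = (\<lambda>q. if (l = 0 \<and> j = 1) \<or> (l = 1 \<and> j = 0) then 1
      else if l = j \<and> (l = 2 \<or> l = 3) then 1 else 0)"
    by (auto simp: pp_metric_def)
  then show ?thesis
    using False by (simp only: pd_const) simp
qed (simp add: pp_metric_def)

lemma matrix_inv_unique:
  fixes A B :: "'a::comm_ring_1^'n^'n"
  assumes "A ** B = mat 1" "B ** A = mat 1"
  shows "matrix_inv A = B"
proof -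
  have "\<exists>A'. A ** A' = mat 1 \<and> A' ** A = mat 1"
    using assms by blast
  then have inv: "matrix_inv A ** A = mat 1"
    unfolding matrix_inv_def by (rule someI2_ex) blast
  have "matrix_inv A = matrix_inv A ** (A ** B)"
    using assms by simp
  also have "\<dots> = B"
    by (simp add: matrix_mul_assoc inv)
  finally show ?thesis .
qed

lemma matrix_inv_pp_metric:
  "matrix_inv (pp_metric H p) = (\<chi> i j. if (i = 0 \<and> j = 1) \<or> (i = 1 \<and> j = 0) then 1
     else if i = 1 \<and> j = 1 then - H (p $ 0) (p $ 2) (p $ 3)
     else if i = j \<and> (i = 2 \<or> i = 3) then 1 else 0)"
  by (rule matrix_inv_unique)
    (simp_all add: matrix_matrix_mult_def mat_def vec_eq_iff sum_UNIV_4_from_0 forall_4_from_0 pp_metric_def)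

text \<open>\<open>pp_christoffel h k i j\<close> is \<open>\<Gamma>\<^sup>k\<^sub>i\<^sub>j\<close> of the pp-wave, h being the gradient of H.\<close>
definition pp_christoffel :: "(4 \<Rightarrow> real) \<Rightarrow> 4 \<Rightarrow> 4 \<Rightarrow> 4 \<Rightarrow> real" where
  "pp_christoffel h k i j =
     (if k = 1 then (of_bool (j = 0) * h i + of_bool (i = 0) * h j - of_bool (i = 0 \<and> j = 0) * h 0) / 2
      else if (k = 2 \<or> k = 3) \<and> i = 0 \<and> j = 0 then - h k / 2 else 0)"

lemma christoffel_pp_metric:
  "christoffel (pp_metric H) p k i j = pp_christoffel (\<lambda>l. pd l (\<lambda>q. H (q $ 0) (q $ 2) (q $ 3)) p) k i j"
proof -
  have "\<forall>k i j. christoffel (pp_metric H) p k i j = pp_christoffel (\<lambda>l. pd l (\<lambda>q. H (q $ 0) (q $ 2) (q $ 3)) p) k i j"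
    unfolding christoffel_def matrix_inv_pp_metric pd_pp_metric sum_UNIV_4_from_0
    by (simp add: forall_4_from_0 pp_christoffel_def pd_H_v)
  then show ?thesis by blast
qed

lemma christoffel_pp_metric_u: "christoffel (pp_metric H) p 0 i j = 0"
  by (simp add: christoffel_pp_metric pp_christoffel_def)

text \<open>The sum over the slots of \<open>\<nu>s\<close> carrying the index u, with that slot replaced by l:
  this is how \<open>\<Gamma>\<^sup>x\<^sub>u\<^sub>u\<close> and \<open>\<Gamma>\<^sup>y\<^sub>u\<^sub>u\<close> act on a form.\<close>
definition u_slot_replacement :: "(4 list \<Rightarrow> real) \<Rightarrow> 4 \<Rightarrow> 4 list \<Rightarrow> real" where
  "u_slot_replacement W l \<nu>s = (\<Sum>a<length \<nu>s. of_bool (\<nu>s ! a = 0) * W (\<nu>s[a := l]))"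

lemma christoffel_sum_pp_metric_cwedge:
  assumes "1 \<notin> set cs"
  shows "christoffel_sum (pp_metric H) p \<mu> (cwedge cs) \<nu>s =
    - of_bool (\<mu> = 0) / 2 * (\<Sum>l\<in>{2, 3}. pd l (\<lambda>q. H (q $ 0) (q $ 2) (q $ 3)) p *
        u_slot_replacement (cwedge cs) l \<nu>s)"
proof -
  let ?h = "\<lambda>l. pd l (\<lambda>q. H (q $ 0) (q $ 2) (q $ 3)) p"
  have v: "cwedge cs (\<nu>s[a := 1]) = 0" if "a < length \<nu>s" for a
    using that assms by (intro cwedge_eq_0_if_index_not_in[of 1]) (auto simp: set_update_memI)
  let ?c = "- of_bool (\<mu> = 0) / 2 :: real"
  let ?X = "\<lambda>a l. of_bool (\<nu>s ! a = 0) * cwedge cs (\<nu>s[a := l])"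
  have "christoffel_sum (pp_metric H) p \<mu> (cwedge cs) \<nu>s
      = (\<Sum>a<length \<nu>s. \<Sum>l\<in>{2, 3}. ?c * (?h l * ?X a l))"
    unfolding christoffel_sum_def
    by (rule sum.cong[OF refl]) (auto simp: sum_UNIV_4_from_0 christoffel_pp_metric pp_christoffel_def v field_simps)
  also have "\<dots> = (\<Sum>l\<in>{2, 3}. \<Sum>a<length \<nu>s. ?c * (?h l * ?X a l))"
    by (rule sum.swap)
  also have "\<dots> = ?c * (\<Sum>l\<in>{2, 3}. ?h l * (\<Sum>a<length \<nu>s. ?X a l))"
    by (simp only: sum_distrib_left)
  finally show ?thesis
    by (simp only: u_slot_replacement_def)
qed

lemma parallel_pp_metric_cwedge:
  assumes "1 \<notin> set cs"
    and "\<And>l \<nu>s. l \<in> {2, 3} \<Longrightarrow> length \<nu>s = length cs \<Longrightarrow> u_slot_replacement (cwedge cs) l \<nu>s = 0"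
  shows "parallel (pp_metric H) (cwedge cs)"
  unfolding parallel_iff_christoffel_sum
proof (intro allI)
  fix p \<mu> \<nu>s
  have "u_slot_replacement (cwedge cs) l \<nu>s = 0" if "l \<in> {2, 3}" for l
  proof (cases "length \<nu>s = length cs")
    case False
    then show ?thesis
      by (simp add: u_slot_replacement_def cwedge_def)
  qed (use assms(2) that in blast)
  then show "christoffel_sum (pp_metric H) p \<mu> (cwedge cs) \<nu>s = 0"
    by (simp add: christoffel_sum_pp_metric_cwedge[OF assms(1)])
qed

lemma is_form_cwedge: "is_form (length cs) (\<lambda>_. cwedge cs)"
  unfolding is_form_def by (simp add: smooth4_const cwedge_swap_adjacent)

lemma is_form_coordinate_u_times_cwedge: "is_form (length cs) (\<lambda>p idx. p $ 0 * cwedge cs idx)"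
  unfolding is_form_def by (simp add: smooth4_coordinate_times cwedge_swap_adjacent)

lemma killing_yano_if_parallel:
  assumes "parallel g W" "is_form k (\<lambda>_. W)"
  shows "killing_yano g k (\<lambda>_. W)"
  using assms unfolding killing_yano_def parallel_def by (simp add: sym2_def split: list.split)

lemma sym2_cov_coordinate_u_times_parallel:
  assumes "parallel g W"
  shows "sym2 (cov g (\<lambda>p idx. p $ 0 * W idx)) = (\<lambda>_. du_sym_tensor W)"
  by (simp add: cov_coordinate_u_times_parallel[OF assms] sym2_du_tensor)

lemma affine_tensor_coordinate_u_times_parallel:
  assumes "\<And>p i j. christoffel g p 0 i j = 0" "parallel g W"
    and "is_form k (\<lambda>p idx. p $ 0 * W idx)"
  shows "affine_tensor g k (\<lambda>p idx. p $ 0 * W idx)"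
  using assms parallel_du_sym_tensor[OF assms(1,2)]
  unfolding affine_tensor_def sym2_cov_coordinate_u_times_parallel[OF assms(2)] parallel_def
  by blast

lemma proper_affine_coordinate_u_times_parallel:
  assumes "\<And>p i j. christoffel g p 0 i j = 0" "parallel g W"
    and "is_form k (\<lambda>p idx. p $ 0 * W idx)"
    and "Suc (length \<nu>s) = k" "W (0 # \<nu>s) \<noteq> 0"
  shows "proper_affine g k (\<lambda>p idx. p $ 0 * W idx)"
proof -
  have "sym2 (cov g (\<lambda>p idx. p $ 0 * W idx)) p (0 # 0 # \<nu>s) = W (0 # \<nu>s)" for p
    by (simp add: sym2_cov_coordinate_u_times_parallel[OF assms(2)] du_sym_tensor_def)
  then have "length (0 # 0 # \<nu>s) = k + 1 \<and> sym2 (cov g (\<lambda>p idx. p $ 0 * W idx)) 0 (0 # 0 # \<nu>s) \<noteq> 0"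
    using assms(4,5) by simp
  then show ?thesis
    unfolding proper_affine_def
    using affine_tensor_coordinate_u_times_parallel[OF assms(1-3)] by blast
qed

lemma closed_form_coordinate_u_du: "closed_form 1 (\<lambda>p idx. p $ 0 * cwedge [0] idx)"
  unfolding closed_form_def
proof (intro allI impI)
  fix p :: pt and idx :: "4 list"
  assume "length idx = Suc 1"
  then obtain a b where "idx = [a, b]"
    by (auto simp: length_Suc_conv numeral_eq_Suc)
  then show "ext_d (\<lambda>p idx. p $ 0 * cwedge [0] idx) p idx = 0"
    by (simp add: ext_d_def numeral_eq_Suc cwedge_singleton pd_coordinate_times)
qed

lemma parallel_pp_metric_du: "parallel (pp_metric H) (cwedge [0])"
proof (rule parallel_pp_metric_cwedge)
  fix l :: 4 and \<nu>s :: "4 list"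
  assume "l \<in> {2, 3}" "length \<nu>s = length [0::4]"
  then show "u_slot_replacement (cwedge [0]) l \<nu>s = 0"
    by (auto simp: u_slot_replacement_def length_Suc_conv cwedge_singleton)
qed simp

lemma u_slot_replacement_two:
  "u_slot_replacement W l [a, b] = of_bool (a = 0) * W [l, b] + of_bool (b = 0) * W [a, l]"
  by (simp add: u_slot_replacement_def numeral_eq_Suc)

lemma u_slot_replacement_three:
  "u_slot_replacement W l [a, b, d] =
     of_bool (a = 0) * W [l, b, d] + of_bool (b = 0) * W [a, l, d] + of_bool (d = 0) * W [a, b, l]"
  by (simp add: u_slot_replacement_def numeral_eq_Suc)

lemma parallel_pp_metric_du_wedge:
  assumes "c = 2 \<or> c = 3"
  shows "parallel (pp_metric H) (cwedge [0, c])"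
proof (rule parallel_pp_metric_cwedge)
  fix l :: 4 and \<nu>s :: "4 list"
  assume l: "l \<in> {2, 3}" and "length \<nu>s = length [0, c]"
  then obtain a b where \<nu>s: "\<nu>s = [a, b]"
    by (auto simp: length_Suc_conv numeral_eq_Suc)
  show "u_slot_replacement (cwedge [0, c]) l \<nu>s = 0"
    unfolding \<nu>s u_slot_replacement_two using l assms
    by (elim insertE disjE; simp; cases a rule: exhaust_4_from_0; cases b rule: exhaust_4_from_0)
      (simp_all add: cwedge_two)
qed (use assms in auto)

lemma parallel_pp_metric_du_wedge_dx_wedge_dy: "parallel (pp_metric H) (cwedge [0, 2, 3])"
proof (rule parallel_pp_metric_cwedge)
  fix l :: 4 and \<nu>s :: "4 list"
  assume l: "l \<in> {2, 3}" and "length \<nu>s = length [0, 2, 3::4]"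
  then obtain a b d where \<nu>s: "\<nu>s = [a, b, d]"
    by (auto simp: length_Suc_conv numeral_eq_Suc)
  show "u_slot_replacement (cwedge [0, 2, 3]) l \<nu>s = 0"
    unfolding \<nu>s u_slot_replacement_three using l
    by (elim insertE; simp;
        cases a rule: exhaust_4_from_0; cases b rule: exhaust_4_from_0; cases d rule: exhaust_4_from_0)
      (simp_all add: cwedge_three)
qed simp

theorem mainTheorem10:
  fixes H :: "real \<Rightarrow> real \<Rightarrow> real \<Rightarrow> real"
  assumes "smooth4 (\<lambda>p. H (p $ 0) (p $ 2) (p $ 3))"
  defines "g \<equiv> pp_metric H"
  shows "affine_tensor g 1 (\<lambda>p idx. p $ 0 * cwedge [0] idx)
       \<and> closed_form 1 (\<lambda>p idx. p $ 0 * cwedge [0] idx)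
       \<and> killing_yano g 2 (\<lambda>p idx. cwedge [0, 2] idx)
       \<and> killing_yano g 2 (\<lambda>p idx. cwedge [0, 3] idx)
       \<and> proper_affine g 2 (\<lambda>p idx. p $ 0 * cwedge [0, 2] idx)
       \<and> proper_affine g 2 (\<lambda>p idx. p $ 0 * cwedge [0, 3] idx)
       \<and> affine_tensor g 3 (\<lambda>p idx. p $ 0 * cwedge [0, 2, 3] idx)"
proof -
  note du = christoffel_pp_metric_u[of H]
  have forms: "is_form 1 (\<lambda>p idx. p $ 0 * cwedge [0] idx)"
      "is_form 2 (\<lambda>_. cwedge [0, c])" "is_form 2 (\<lambda>p idx. p $ 0 * cwedge [0, c] idx)"
      "is_form 3 (\<lambda>p idx. p $ 0 * cwedge [0, 2, 3] idx)" for c :: 4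
    using is_form_cwedge[of "[0, c]"] is_form_coordinate_u_times_cwedge[of "[0]"]
      is_form_coordinate_u_times_cwedge[of "[0, c]"] is_form_coordinate_u_times_cwedge[of "[0, 2, 3]"]
    by (simp_all add: numeral_eq_Suc)
  have proper_du_wedge: "proper_affine g 2 (\<lambda>p idx. p $ 0 * cwedge [0, c] idx)" if "c = 2 \<or> c = 3" for c
    unfolding g_def
    using proper_affine_coordinate_u_times_parallel[OF du parallel_pp_metric_du_wedge[OF that] forms(3),
        where \<nu>s = "[c]"] that
    by (auto simp: cwedge_two)
  have killing_yano_du_wedge: "killing_yano g 2 (\<lambda>_. cwedge [0, c])" if "c = 2 \<or> c = 3" for c
    unfolding g_def by (rule killing_yano_if_parallel[OF parallel_pp_metric_du_wedge[OF that] forms(2)])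
  show ?thesis
    unfolding g_def
    using affine_tensor_coordinate_u_times_parallel[OF du parallel_pp_metric_du forms(1)]
      affine_tensor_coordinate_u_times_parallel[OF du parallel_pp_metric_du_wedge_dx_wedge_dy forms(4)]
      closed_form_coordinate_u_du killing_yano_du_wedge[unfolded g_def]
      proper_du_wedge[unfolded g_def]
    by simp
qed

end
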